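(* For each prime $p$, let $\Phi_p=\{x\mapsto j+px : j\in\{0,2,4,\dots\},\ 0\le j\le p-1\}$ (so $\Phi_2=\{x\mapsto 2x\}$ and, for $p>2$, $\Phi_p=\{px,2+px,\dots,p-1+px\}$), and let $\mathcal{C}_p=\{\sum_{i\ge0}a_ip^i\in\mathbb{Z}_p : a_i\text{ even for all } i\}$ (so $\mathcal{C}_2=\{0\}$). Let $\mathcal{C}_{\mathbb{A}_0}=\prod_{p}\mathcal{C}_p\subseteq\prod_p\mathbb{Z}_p\subseteq\mathbb{A}_0$ and define $\Phi$ on subsets of $\prod_p\mathbb{Z}_p$ of product form by $\Phi\big(\prod_pA_p\big)=\prod_p\bigcup_{\phi\in\Phi_p}\phi(A_p)$. Then $\Phi(\mathcal{C}_{\mathbb{A}_0})=\mathcal{C}_{\mathbb{A}_0}$; that is, the ad\`elic Cantor string $\mathcal{CS}_{\mathbb{A}_0}=\prod_p\mathcal{CS}_p$ is self-similar in $\mathbb{A}_0$.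
   Context: $\mathbb{Z}_p$ is the ring of $p$-adic integers, $\mathbb{Q}_p$ the field of $p$-adic numbers. The set of finite ad\`eles is $\mathbb{A}_0=\{(x_2,x_3,x_5,\dots): x_p\in\mathbb{Q}_p\text{ for all primes }p,\ x_p\in\mathbb{Z}_p\text{ for all but finitely many }p\}$. For each prime $p$, $\mathcal{CS}_p=\mathbb{Z}_p\setminus\mathcal{C}_p$ is the $p$-adic Cantor string (for $p=2$, $\mathcal{CS}_2=\bigcup_{n\ge0}(2^n+2^{n+1}\mathbb{Z}_2)$), and the ad\`elic Cantor string is $\mathcal{CS}_{\mathbb{A}_0}=\prod_p\mathcal{CS}_p$, with associated ad\`elic Cantor set $\mathcal{C}_{\mathbb{A}_0}=\prod_p\mathcal{C}_p$. In this paper, the ad\`elic Cantor string is called self-similar when its associated Cantor set is invariant under the componentwise iterated function system $\Phi$, i.e. $\Phi(\mathcal{C}_{\mathbb{A}_0})=\mathcal{C}_{\mathbb{A}_0}$. *)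

theory Defs
  imports "HOL-Computational_Algebra.Primes" "HOL-Library.FuncSet"
begin

text \<open>p-adic integers as the inverse limit of Z/p^n Z: a compatible sequence of
  residues x n in {0..<p^n}.\<close>
definition Zp :: "nat \<Rightarrow> (nat \<Rightarrow> int) set" where
  "Zp p = {x. \<forall>n. 0 \<le> x n \<and> x n < int p ^ n \<and> x (Suc n) mod (int p ^ n) = x n}"

definition padd :: "nat \<Rightarrow> (nat \<Rightarrow> int) \<Rightarrow> (nat \<Rightarrow> int) \<Rightarrow> (nat \<Rightarrow> int)" where
  "padd p x y = (\<lambda>n. (x n + y n) mod (int p ^ n))"

definition pmul :: "nat \<Rightarrow> (nat \<Rightarrow> int) \<Rightarrow> (nat \<Rightarrow> int) \<Rightarrow> (nat \<Rightarrow> int)" where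
  "pmul p x y = (\<lambda>n. (x n * y n) mod (int p ^ n))"

definition pofint :: "nat \<Rightarrow> int \<Rightarrow> (nat \<Rightarrow> int)" where
  "pofint p j = (\<lambda>n. j mod (int p ^ n))"

text \<open>p-adic Cantor set: sums \<Sum> a_i p^i with all digits a_i even (digits in {0..p-1});
  the n-th residue of \<Sum> a_i p^i is the partial sum \<Sum>_{i<n} a_i p^i.\<close>
definition Cantor_p :: "nat \<Rightarrow> (nat \<Rightarrow> int) set" where
  "Cantor_p p = {x \<in> Zp p. \<exists>a::nat \<Rightarrow> nat. (\<forall>i. a i < p \<and> even (a i)) \<and>
                    (\<forall>n. x n = (\<Sum>i<n. int (a i) * int p ^ i))}"

definition Phi_p :: "nat \<Rightarrow> ((nat \<Rightarrow> int) \<Rightarrow> (nat \<Rightarrow> int)) set" where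
  "Phi_p p = {(\<lambda>x. padd p (pofint p (int j)) (pmul p (pofint p (int p)) x)) | j. even j \<and> j \<le> p - 1}"

definition adelic_prod :: "(nat \<Rightarrow> (nat \<Rightarrow> int) set) \<Rightarrow> (nat \<Rightarrow> (nat \<Rightarrow> int)) set" where
  "adelic_prod A = (\<Pi>\<^sub>E p\<in>{p. prime p}. A p)"

definition adelic_Cantor_set :: "(nat \<Rightarrow> (nat \<Rightarrow> int)) set" where
  "adelic_Cantor_set = adelic_prod Cantor_p"

definition Phi_adelic :: "(nat \<Rightarrow> (nat \<Rightarrow> int) set) \<Rightarrow> (nat \<Rightarrow> (nat \<Rightarrow> int)) set" where
  "Phi_adelic A = adelic_prod (\<lambda>p. \<Union>\<phi>\<in>Phi_p p. \<phi> ` A p)"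

end

theory Submission
  imports Defs
begin

text \<open>In base-p digits, x \<mapsto> j + p x prepends the digit j to the digit sequence of x.
  So for even j < p it maps even-digit sequences to even-digit sequences, and every even-digit
  sequence arises this way from its tail by prepending its first digit. Thus C_p is invariant
  under \<Phi>_p for every prime p, and \<Phi> acts componentwise on the product.\<close>

definition digit_sum :: "nat \<Rightarrow> (nat \<Rightarrow> nat) \<Rightarrow> nat \<Rightarrow> int" where
  "digit_sum p a n = (\<Sum>i<n. int (a i) * int p ^ i)"

lemma digit_sum_Suc: "digit_sum p a (Suc n) = digit_sum p a n + int (a n) * int p ^ n"
  by (simp add: digit_sum_def)

lemma digit_sum_bounds:
  assumes "\<forall>i. a i < p"
  shows "0 \<le> digit_sum p a n \<and> digit_sum p a n < int p ^ n"
proof (induction n)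
  case 0
  then show ?case by (simp add: digit_sum_def)
next
  case (Suc n)
  have "int (a n) * int p ^ n \<le> (int p - 1) * int p ^ n"
    using assms by (intro mult_right_mono) (auto simp: less_eq_Suc_le)
  then have "digit_sum p a (Suc n) < int p ^ n + (int p - 1) * int p ^ n"
    using Suc digit_sum_Suc[of p a n] by linarith
  also have "\<dots> = int p ^ Suc n"
    by (simp add: algebra_simps)
  finally show ?case
    using Suc digit_sum_Suc[of p a n] by simp
qed

lemma digit_sum_Suc_mod:
  assumes "\<forall>i. a i < p"
  shows "digit_sum p a (Suc n) mod int p ^ n = digit_sum p a n"
  unfolding digit_sum_Suc using digit_sum_bounds[OF assms, of n] by simp

lemma digit_sum_in_Zp:
  assumes "\<forall>i. a i < p"
  shows "digit_sum p a \<in> Zp p"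
  using digit_sum_bounds[OF assms] digit_sum_Suc_mod[OF assms] unfolding Zp_def by auto

lemma digit_sum_case_nat: "digit_sum p (case_nat j a) (Suc n) = int j + int p * digit_sum p a n"
  unfolding digit_sum_def
  by (simp add: sum.lessThan_Suc_shift sum_distrib_left algebra_simps del: sum.lessThan_Suc)

lemma padd_pofint_pmul_pofint:
  "padd p (pofint p j) (pmul p (pofint p k) x) = (\<lambda>n. (j + k * x n) mod int p ^ n)"
  unfolding padd_def pmul_def pofint_def
  by (rule ext) (simp add: mod_add_left_eq mod_add_right_eq mod_mult_left_eq)

lemma affine_map_digit_sum:
  assumes "\<forall>i. a i < p" and "j < p"
  shows "padd p (pofint p (int j)) (pmul p (pofint p (int p)) (digit_sum p a))
           = digit_sum p (case_nat j a)"
proof -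
  have "\<forall>i. case_nat j a i < p"
    using assms by (auto split: nat.split)
  then show ?thesis
    unfolding padd_pofint_pmul_pofint digit_sum_case_nat[symmetric]
    by (simp add: digit_sum_Suc_mod)
qed

lemma Cantor_p_eq_digit_sums: "Cantor_p p = {digit_sum p a | a. \<forall>i. a i < p \<and> even (a i)}"
proof -
  have "x \<in> Zp p" if "\<forall>i. a i < p \<and> even (a i)" and "x = digit_sum p a" for x a
    using that digit_sum_in_Zp[of a p] by auto
  then show ?thesis
    unfolding Cantor_p_def by (auto simp: fun_eq_iff digit_sum_def)
qed

lemma Cantor_p_self_similar:
  assumes "0 < p"
  shows "(\<Union>\<phi>\<in>Phi_p p. \<phi> ` Cantor_p p) = Cantor_p p"
proof
  show "(\<Union>\<phi>\<in>Phi_p p. \<phi> ` Cantor_p p) \<subseteq> Cantor_p p"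
  proof
    fix y assume "y \<in> (\<Union>\<phi>\<in>Phi_p p. \<phi> ` Cantor_p p)"
    then obtain j a where j: "even j" "j \<le> p - 1" and a: "\<forall>i. a i < p \<and> even (a i)"
      and y: "y = padd p (pofint p (int j)) (pmul p (pofint p (int p)) (digit_sum p a))"
      unfolding Phi_p_def Cantor_p_eq_digit_sums by blast
    have "j < p"
      using j assms by linarith
    then have "y = digit_sum p (case_nat j a)"
      using y a affine_map_digit_sum[of a p j] by auto
    moreover have "\<forall>i. case_nat j a i < p \<and> even (case_nat j a i)"
      using a j \<open>j < p\<close> by (auto split: nat.split)
    ultimately show "y \<in> Cantor_p p"
      unfolding Cantor_p_eq_digit_sums by blast
  qed
next
  show "Cantor_p p \<subseteq> (\<Union>\<phi>\<in>Phi_p p. \<phi> ` Cantor_p p)"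
  proof
    fix y assume "y \<in> Cantor_p p"
    then obtain b where b: "\<forall>i. b i < p \<and> even (b i)" and y: "y = digit_sum p b"
      unfolding Cantor_p_eq_digit_sums by blast
    define a where "a = (\<lambda>i. b (Suc i))"
    have b_split: "case_nat (b 0) a = b"
      by (rule ext) (simp add: a_def split: nat.split)
    have a: "\<forall>i. a i < p \<and> even (a i)"
      using b by (simp add: a_def)
    have "b 0 < p"
      using b by blast
    have "y = padd p (pofint p (int (b 0))) (pmul p (pofint p (int p)) (digit_sum p a))"
      using affine_map_digit_sum[of a p "b 0"] a \<open>b 0 < p\<close> b_split y by auto
    moreover have "digit_sum p a \<in> Cantor_p p"
      unfolding Cantor_p_eq_digit_sums using a by blast
    moreover have "(\<lambda>x. padd p (pofint p (int (b 0))) (pmul p (pofint p (int p)) x)) \<in> Phi_p p"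
      unfolding Phi_p_def using b \<open>b 0 < p\<close> by fastforce
    ultimately show "y \<in> (\<Union>\<phi>\<in>Phi_p p. \<phi> ` Cantor_p p)"
      by blast
  qed
qed

theorem theorem4p8:
  shows "Phi_adelic Cantor_p = adelic_Cantor_set"
  unfolding Phi_adelic_def adelic_Cantor_set_def adelic_prod_def
  using Cantor_p_self_similar prime_gt_0_nat by (intro PiE_cong) auto

end
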